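(* Let $N\ge 2$ and let $(\nu_r^{(1:N)})_{r\ge1}$ be vectors of non-negative integers with $\sum_i \nu_r^{(i)} = N$, with $c_N$, $D_N$, $\tau_N$ as defined below, and assume $\tau_N(u)<\infty$ for all $u\ge0$. Fix $t > 0$ and $l \in \mathbb{N}$. Then for any constant $B > 0$, $$\sum_{\substack{s_1,\dots,s_l=1\\\text{all distinct}}}^{\tau_N(t)}\prod_{j=1}^l\big[c_N(s_j) + BD_N(s_j)\big] \leq \sum_{\substack{s_1,\dots,s_l=1\\\text{all distinct}}}^{\tau_N(t)}\prod_{j=1}^l c_N(s_j) + \Bigg(\sum_{s=1}^{\tau_N(t)} D_N(s)\Bigg)(t+1)^{l-1}(1+B)^l.$$
   Context: $(x)_k$ is the falling factorial. $c_N(r) := \frac{1}{(N)_2}\sum_{i=1}^N(\nu_r^{(i)})_2$; $D_N(r) := \frac{1}{N(N)_2}\sum_{i=1}^N(\nu_r^{(i)})_2\{\nu_r^{(i)} + \frac1N\sum_{j\ne i}(\nu_r^{(j)})^2\}$; $\tau_N(u) := \inf\{s\in\{0,1,2,\dots\} : \sum_{r=1}^s c_N(r) \ge u\}$. *)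

theory Defs
  imports "HOL-Analysis.Analysis"
begin

definition falling :: "real \<Rightarrow> nat \<Rightarrow> real" where
  "falling x k = (\<Prod>i<k. x - real i)"

text \<open>nu r i = \<nu>_r^{(i)}, for generations r \<ge> 1 and individuals i \<in> {1..N}.\<close>
definition cN :: "nat \<Rightarrow> (nat \<Rightarrow> nat \<Rightarrow> nat) \<Rightarrow> nat \<Rightarrow> real" where
  "cN N nu r = (1 / falling (real N) 2) * (\<Sum>i=1..N. falling (real (nu r i)) 2)"

definition DN :: "nat \<Rightarrow> (nat \<Rightarrow> nat \<Rightarrow> nat) \<Rightarrow> nat \<Rightarrow> real" where
  "DN N nu r = (1 / (real N * falling (real N) 2)) *
     (\<Sum>i=1..N. falling (real (nu r i)) 2 *
        (real (nu r i) + (1 / real N) * (\<Sum>j\<in>{1..N} - {i}. (real (nu r j))^2)))"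

definition tauN :: "nat \<Rightarrow> (nat \<Rightarrow> nat \<Rightarrow> nat) \<Rightarrow> real \<Rightarrow> nat" where
  "tauN N nu u = (LEAST s. (\<Sum>r=1..s. cN N nu r) \<ge> u)"

definition distinct_tuples :: "nat \<Rightarrow> nat \<Rightarrow> (nat \<Rightarrow> nat) set" where
  "distinct_tuples l T = {s. s \<in> {1..l} \<rightarrow>\<^sub>E {1..T} \<and> inj_on s {1..l}}"

end

theory Submission
  imports Defs
begin

text \<open>
  Expand each product \<open>\<Prod>(c + B d)\<close> over the set \<open>J\<close> of factors contributing \<open>B d\<close>.
  The term \<open>J = {}\<close> is the product of the \<open>c\<close>'s. For \<open>J \<noteq> {}\<close> bound every \<open>d\<close>-factor
  but one by the corresponding \<open>c\<close> (the constraint \<open>\<Sum>\<nu> = N\<close> gives \<open>0 \<le> D\<^sub>N \<le> c\<^sub>N \<le> 1\<close>) and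
  enlarge the sum over distinct tuples to all tuples; it then factorises as
  \<open>B\<^bsup>|J|\<^esup> (\<Sum>D\<^sub>N) (\<Sum>c\<^sub>N)\<^bsup>l-1\<^esup>\<close>, and \<open>\<Sum>\<^bsub>J\<^esub> B\<^bsup>|J|\<^esup> \<le> (1 + B)\<^bsup>l\<^esup>\<close>. Finally
  \<open>\<Sum>\<^bsub>s \<le> \<tau>\<^sub>N(t)\<^esub> c\<^sub>N(s) \<le> t + 1\<close>, since the partial sums stay below \<open>t\<close> before \<open>\<tau>\<^sub>N(t)\<close>
  and the last summand is at most 1.
\<close>

lemma falling_2: "falling x 2 = x * (x - 1)"
  by (simp add: falling_def numeral_2_eq_2)

lemma falling_2_of_nat_nonneg: "0 \<le> falling (real n) 2"
  by (cases n) (auto simp: falling_2)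

lemma sum_times_pred_le:
  fixes v :: "'a \<Rightarrow> real"
  assumes "finite A" "\<And>j. j \<in> A \<Longrightarrow> 0 \<le> v j" "sum v A = n"
  shows "(\<Sum>i\<in>A. v i * (v i - 1)) \<le> n * (n - 1)"
proof -
  have "(\<Sum>i\<in>A. v i * (v i - 1)) \<le> (\<Sum>i\<in>A. v i * (n - 1))"
  proof (rule sum_mono)
    fix i assume "i \<in> A"
    moreover have "v i \<le> sum v A"
      using \<open>i \<in> A\<close> assms(1,2) by (intro member_le_sum) auto
    ultimately show "v i * (v i - 1) \<le> v i * (n - 1)"
      using assms(2,3) by (intro mult_left_mono) auto
  qed
  also have "\<dots> = n * (n - 1)"
    by (simp add: assms(3) flip: sum_distrib_right)
  finally show ?thesis .
qed

lemma add_sum_squares_remove_div_le: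
  fixes v :: "'a \<Rightarrow> real"
  assumes "finite A" "\<And>j. j \<in> A \<Longrightarrow> 0 \<le> v j" "sum v A = n" "i \<in> A" "0 < n"
  shows "v i + (\<Sum>j\<in>A - {i}. (v j)\<^sup>2) / n \<le> n"
proof -
  have rest: "(\<Sum>j\<in>A - {i}. v j) = n - v i"
    using assms by (simp add: sum_diff1)
  have "(\<Sum>j\<in>A - {i}. (v j)\<^sup>2) \<le> (\<Sum>j\<in>A - {i}. v j * (n - v i))"
  proof (rule sum_mono)
    fix j assume j: "j \<in> A - {i}"
    have "v j \<le> n - v i"
      using j assms(1,2) by (auto simp flip: rest intro: member_le_sum)
    then show "(v j)\<^sup>2 \<le> v j * (n - v i)"
      using j assms(2) by (simp add: power2_eq_square mult_left_mono)
  qed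
  also have "\<dots> = (n - v i)\<^sup>2"
    by (simp add: rest power2_eq_square flip: sum_distrib_right)
  finally have "v i + (\<Sum>j\<in>A - {i}. (v j)\<^sup>2) / n \<le> v i + (n - v i)\<^sup>2 / n"
    using assms(5) by (simp add: divide_right_mono)
  also have "\<dots> = n - (n * v i - (v i)\<^sup>2) / n"
    using assms(5) by (simp add: field_simps power2_eq_square)
  also have "\<dots> \<le> n"
  proof -
    have "v i \<le> sum v A"
      using assms(4,1,2) by (intro member_le_sum) auto
    then have "(v i)\<^sup>2 \<le> n * v i"
      using assms(2-4) by (simp add: power2_eq_square mult_right_mono)
    then show ?thesis
      using assms(5) by simp
  qed
  finally show ?thesis .
qed

lemma cN_nonneg: "0 \<le> cN N nu r"
  unfolding cN_def by (intro mult_nonneg_nonneg sum_nonneg) (simp_all add: falling_2_of_nat_nonneg)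

lemma DN_nonneg: "0 \<le> DN N nu r"
  unfolding DN_def
  by (intro mult_nonneg_nonneg sum_nonneg add_nonneg_nonneg)
     (simp_all add: falling_2_of_nat_nonneg)

lemma cN_le_1:
  assumes "(\<Sum>i=1..N. nu r i) = N"
  shows "cN N nu r \<le> 1"
proof -
  have "(\<Sum>i=1..N. falling (real (nu r i)) 2) \<le> falling (real N) 2"
    unfolding falling_2 using assms by (intro sum_times_pred_le) (simp_all flip: of_nat_sum)
  then show ?thesis
    unfolding cN_def using falling_2_of_nat_nonneg[of N]
    by (cases "falling (real N) 2 = 0") (simp_all add: divide_le_eq_1)
qed

lemma DN_le_cN:
  assumes "(\<Sum>i=1..N. nu r i) = N"
  shows "DN N nu r \<le> cN N nu r"
proof (cases "N = 0")
  case True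
  then show ?thesis by (simp add: DN_def cN_def)
next
  case False
  have summand_le: "falling (real (nu r i)) 2 *
        (real (nu r i) + 1 / real N * (\<Sum>j\<in>{1..N} - {i}. (real (nu r j))\<^sup>2))
      \<le> falling (real (nu r i)) 2 * real N" if "i \<in> {1..N}" for i
  proof (rule mult_left_mono)
    have "real (nu r i) + (\<Sum>j\<in>{1..N} - {i}. (real (nu r j))\<^sup>2) / real N \<le> real N"
      using that assms False by (intro add_sum_squares_remove_div_le) (simp_all flip: of_nat_sum)
    then show "real (nu r i) + 1 / real N * (\<Sum>j\<in>{1..N} - {i}. (real (nu r j))\<^sup>2) \<le> real N"
      by simp
  qed (rule falling_2_of_nat_nonneg)
  have "DN N nu r \<le> 1 / (real N * falling (real N) 2) *
      (\<Sum>i=1..N. falling (real (nu r i)) 2 * real N)"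
    unfolding DN_def
    by (rule mult_left_mono[OF sum_mono[OF summand_le]]) (simp_all add: falling_2_of_nat_nonneg)
  also have "\<dots> = cN N nu r"
    using False by (simp add: cN_def flip: sum_distrib_right)
  finally show ?thesis .
qed

lemma sum_upto_Least_ge_le:
  fixes c :: "nat \<Rightarrow> real"
  assumes "\<And>r. r \<ge> 1 \<Longrightarrow> c r \<le> 1" and "0 \<le> t"
  shows "(\<Sum>r=1..(LEAST s. t \<le> (\<Sum>r=1..s. c r)). c r) \<le> t + 1"
proof (cases "LEAST s. t \<le> (\<Sum>r=1..s. c r)")
  case 0
  then show ?thesis
    using assms(2) by simp
next
  case (Suc m)
  then have "\<not> t \<le> (\<Sum>r=1..m. c r)"
    using not_less_Least[of m "\<lambda>s. t \<le> (\<Sum>r=1..s. c r)"] by simp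
  then show ?thesis
    using Suc assms(1)[of "Suc m"] by simp
qed

lemma prod_add_eq_prod_plus_sum_nonempty:
  fixes f g :: "'a \<Rightarrow> 'b::comm_semiring_1"
  assumes "finite I"
  shows "(\<Prod>j\<in>I. g j + f j) =
    (\<Prod>j\<in>I. g j) + (\<Sum>J\<in>Pow I - {{}}. (\<Prod>j\<in>J. f j) * (\<Prod>j\<in>I - J. g j))"
proof -
  have "(\<Prod>j\<in>I. g j + f j) = (\<Sum>J\<in>Pow I. (\<Prod>j\<in>J. f j) * (\<Prod>j\<in>I - J. g j))"
    using prod_add[OF assms, of f g] by (simp add: add.commute)
  also have "\<dots> = (\<Prod>j\<in>I. g j) + (\<Sum>J\<in>Pow I - {{}}. (\<Prod>j\<in>J. f j) * (\<Prod>j\<in>I - J. g j))"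
    using assms by (subst sum.remove[where x = "{}"]) auto
  finally show ?thesis .
qed

lemma sum_power_card_Pow:
  fixes x :: "'b::comm_semiring_1"
  assumes "finite I"
  shows "(\<Sum>J\<in>Pow I. x ^ card J) = (1 + x) ^ card I"
  using prod_add[OF assms, of "\<lambda>_. x" "\<lambda>_. 1"] by (simp add: add.commute)

lemma sum_PiE_prod_remove:
  fixes f g :: "'b \<Rightarrow> 'c::comm_semiring_1"
  assumes "finite I" "finite A" "k \<in> I"
  shows "(\<Sum>s\<in>PiE I (\<lambda>_. A). f (s k) * (\<Prod>j\<in>I - {k}. g (s j)))
    = sum f A * sum g A ^ (card I - 1)"
proof -
  define h where "h j = (if j = k then f else g)" for j
  have h_remove: "(\<Prod>j\<in>I. H j (h j)) = H k f * (\<Prod>j\<in>I - {k}. H j g)"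
    for H :: "'a \<Rightarrow> ('b \<Rightarrow> 'c) \<Rightarrow> 'c"
  proof -
    have "(\<Prod>j\<in>I. H j (h j)) = H k (h k) * (\<Prod>j\<in>I - {k}. H j (h j))"
      using assms by (simp add: prod.remove)
    also have "(\<Prod>j\<in>I - {k}. H j (h j)) = (\<Prod>j\<in>I - {k}. H j g)"
      by (rule prod.cong) (auto simp: h_def)
    finally show ?thesis
      by (simp add: h_def)
  qed
  have "(\<Sum>s\<in>PiE I (\<lambda>_. A). f (s k) * (\<Prod>j\<in>I - {k}. g (s j)))
      = (\<Sum>s\<in>PiE I (\<lambda>_. A). \<Prod>j\<in>I. h j (s j))"
    using h_remove[of "\<lambda>j \<phi>. \<phi> (s j)" for s] by simp
  also have "\<dots> = (\<Prod>j\<in>I. \<Sum>y\<in>A. h j y)"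
    using assms by (simp add: prod_sum_PiE)
  also have "\<dots> = sum f A * sum g A ^ (card I - 1)"
    using h_remove[of "\<lambda>_ \<phi>. sum \<phi> A"] assms by simp
  finally show ?thesis .
qed

lemma mixed_prod_le:
  fixes c d :: "'a \<Rightarrow> real"
  assumes "finite I" "J \<subseteq> I" "k \<in> J" "0 \<le> B"
    and "\<And>j. j \<in> I \<Longrightarrow> 0 \<le> d j \<and> d j \<le> c j"
  shows "(\<Prod>j\<in>J. B * d j) * (\<Prod>j\<in>I - J. c j) \<le> B ^ card J * (d k * (\<Prod>j\<in>I - {k}. c j))"
proof -
  have fin: "finite J"
    using assms(1,2) by (rule finite_subset[rotated])
  have "(\<Prod>j\<in>J. B * d j) * (\<Prod>j\<in>I - J. c j)
      = B ^ card J * (d k * ((\<Prod>j\<in>J - {k}. d j) * (\<Prod>j\<in>I - J. c j)))"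
    using fin assms(3) by (simp add: prod.distrib prod.remove mult.assoc)
  also have "\<dots> \<le> B ^ card J * (d k * ((\<Prod>j\<in>J - {k}. c j) * (\<Prod>j\<in>I - J. c j)))"
    using assms by (intro mult_left_mono mult_right_mono prod_mono prod_nonneg) force+
  also have "(\<Prod>j\<in>J - {k}. c j) * (\<Prod>j\<in>I - J. c j) = (\<Prod>j\<in>I - {k}. c j)"
  proof -
    have "I - {k} = (J - {k}) \<union> (I - J)"
      using assms(2,3) by blast
    then show ?thesis
      using assms(1) fin by (simp add: prod.union_disjoint Diff_Int_distrib2)
  qed
  finally show ?thesis .
qed

lemma sum_PiE_mixed_prod_le:
  fixes c d :: "'b \<Rightarrow> real"
  assumes "finite I" "finite A" "J \<subseteq> I" "J \<noteq> {}" "0 \<le> B"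
    and "\<And>x. x \<in> A \<Longrightarrow> 0 \<le> d x \<and> d x \<le> c x"
  shows "(\<Sum>s\<in>PiE I (\<lambda>_. A). (\<Prod>j\<in>J. B * d (s j)) * (\<Prod>j\<in>I - J. c (s j)))
    \<le> B ^ card J * (sum d A * sum c A ^ (card I - 1))"
proof -
  obtain k where k: "k \<in> J"
    using assms(4) by blast
  have "(\<Prod>j\<in>J. B * d (s j)) * (\<Prod>j\<in>I - J. c (s j))
      \<le> B ^ card J * (d (s k) * (\<Prod>j\<in>I - {k}. c (s j)))" if "s \<in> PiE I (\<lambda>_. A)" for s
    using that assms(1,3,5,6) k by (intro mixed_prod_le) (auto simp: PiE_mem)
  then have "(\<Sum>s\<in>PiE I (\<lambda>_. A). (\<Prod>j\<in>J. B * d (s j)) * (\<Prod>j\<in>I - J. c (s j)))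
      \<le> (\<Sum>s\<in>PiE I (\<lambda>_. A). B ^ card J * (d (s k) * (\<Prod>j\<in>I - {k}. c (s j))))"
    by (rule sum_mono)
  also have "\<dots> = B ^ card J * (sum d A * sum c A ^ (card I - 1))"
    using assms(1-3) k by (auto simp: sum_PiE_prod_remove simp flip: sum_distrib_left)
  finally show ?thesis .
qed

lemma sum_prod_add_le:
  fixes c d :: "'b \<Rightarrow> real"
  assumes "finite I" "finite A" "S \<subseteq> PiE I (\<lambda>_. A)" "0 \<le> B"
    and cd: "\<And>x. x \<in> A \<Longrightarrow> 0 \<le> d x \<and> d x \<le> c x"
  shows "(\<Sum>s\<in>S. \<Prod>j\<in>I. c (s j) + B * d (s j))
    \<le> (\<Sum>s\<in>S. \<Prod>j\<in>I. c (s j)) + sum d A * sum c A ^ (card I - 1) * (1 + B) ^ card I"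
proof -
  define Q where "Q = Pow I - {{}}"
  define mixed where "mixed s J = (\<Prod>j\<in>J. B * d (s j)) * (\<Prod>j\<in>I - J. c (s j))" for s J
  have fin: "finite (PiE I (\<lambda>_. A))" "finite Q"
    using assms(1,2) by (simp_all add: finite_PiE Q_def)
  have mixed_nonneg: "0 \<le> mixed s J" if "s \<in> PiE I (\<lambda>_. A)" "J \<in> Q" for s J
    using that cd assms(4) unfolding mixed_def Q_def
    by (intro mult_nonneg_nonneg prod_nonneg) (force simp: PiE_mem)+
  have "(\<Sum>s\<in>S. \<Sum>J\<in>Q. mixed s J) \<le> (\<Sum>s\<in>PiE I (\<lambda>_. A). \<Sum>J\<in>Q. mixed s J)"
    using fin assms(3) mixed_nonneg by (intro sum_mono2 sum_nonneg) auto
  also have "\<dots> = (\<Sum>J\<in>Q. \<Sum>s\<in>PiE I (\<lambda>_. A). mixed s J)"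
    by (rule sum.swap)
  also have "\<dots> \<le> (\<Sum>J\<in>Q. B ^ card J * (sum d A * sum c A ^ (card I - 1)))"
    unfolding mixed_def Q_def using assms by (intro sum_mono sum_PiE_mixed_prod_le) auto
  also have "\<dots> = (\<Sum>J\<in>Q. B ^ card J) * (sum d A * sum c A ^ (card I - 1))"
    by (simp add: sum_distrib_right)
  also have "\<dots> \<le> (\<Sum>J\<in>Pow I. B ^ card J) * (sum d A * sum c A ^ (card I - 1))"
  proof (rule mult_right_mono)
    show "(\<Sum>J\<in>Q. B ^ card J) \<le> (\<Sum>J\<in>Pow I. B ^ card J)"
      using assms(1,4) by (intro sum_mono2) (auto simp: Q_def)
    have "\<And>x. x \<in> A \<Longrightarrow> 0 \<le> c x"
      using cd by (meson order_trans)
    then show "0 \<le> sum d A * sum c A ^ (card I - 1)"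
      using cd by (simp add: sum_nonneg)
  qed
  finally have "(\<Sum>s\<in>S. \<Sum>J\<in>Q. mixed s J) \<le> sum d A * sum c A ^ (card I - 1) * (1 + B) ^ card I"
    using assms(1) by (simp add: sum_power_card_Pow mult.commute)
  moreover have "(\<Prod>j\<in>I. c (s j) + B * d (s j)) = (\<Prod>j\<in>I. c (s j)) + (\<Sum>J\<in>Q. mixed s J)" for s
    unfolding Q_def mixed_def using assms(1) by (rule prod_add_eq_prod_plus_sum_nonempty)
  ultimately show ?thesis
    by (simp add: sum.distrib)
qed

theorem lemma5:
  fixes N :: nat and nu :: "nat \<Rightarrow> nat \<Rightarrow> nat" and t B :: real and l :: nat
  assumes "N \<ge> 2"
    and "\<And>r. r \<ge> 1 \<Longrightarrow> (\<Sum>i=1..N. nu r i) = N"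
    and "\<And>u. u \<ge> 0 \<Longrightarrow> \<exists>s. (\<Sum>r=1..s. cN N nu r) \<ge> u"
    and "t > 0" and "B > 0"
  shows "(\<Sum>s\<in>distinct_tuples l (tauN N nu t).
            \<Prod>j=1..l. cN N nu (s j) + B * DN N nu (s j))
         \<le> (\<Sum>s\<in>distinct_tuples l (tauN N nu t). \<Prod>j=1..l. cN N nu (s j))
           + (\<Sum>s=1..tauN N nu t. DN N nu s) * (t + 1) ^ (l - 1) * (1 + B) ^ l"
proof -
  \<comment> \<open>Neither \<open>N \<ge> 2\<close> nor the finiteness of \<open>tauN\<close> is needed: the bounds on \<open>cN\<close> and \<open>DN\<close>
    hold for every \<open>N\<close> (for \<open>N \<le> 1\<close> both vanish by division by zero), and the partial-sum
    bound also holds for the junk value of \<open>LEAST\<close>.\<close>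
  let ?T = "tauN N nu t"
  have tuples: "distinct_tuples l ?T \<subseteq> PiE {1..l} (\<lambda>_. {1..?T})"
    unfolding distinct_tuples_def by blast
  have DN_cN: "0 \<le> DN N nu r \<and> DN N nu r \<le> cN N nu r" if "r \<in> {1..?T}" for r
    using that assms(2) by (simp add: DN_nonneg DN_le_cN)
  have "sum (cN N nu) {1..?T} \<le> t + 1"
    unfolding tauN_def using assms(2,4) by (intro sum_upto_Least_ge_le cN_le_1) auto
  then have "sum (cN N nu) {1..?T} ^ (l - 1) \<le> (t + 1) ^ (l - 1)"
    by (intro power_mono sum_nonneg cN_nonneg)
  then have tail: "sum (DN N nu) {1..?T} * sum (cN N nu) {1..?T} ^ (l - 1) * (1 + B) ^ l
      \<le> sum (DN N nu) {1..?T} * (t + 1) ^ (l - 1) * (1 + B) ^ l"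
    using assms(5) by (intro mult_right_mono mult_left_mono sum_nonneg DN_nonneg) auto
  have "(\<Sum>s\<in>distinct_tuples l ?T. \<Prod>j=1..l. cN N nu (s j) + B * DN N nu (s j))
      \<le> (\<Sum>s\<in>distinct_tuples l ?T. \<Prod>j=1..l. cN N nu (s j))
        + sum (DN N nu) {1..?T} * sum (cN N nu) {1..?T} ^ (l - 1) * (1 + B) ^ l"
    using sum_prod_add_le[where c = "cN N nu" and d = "DN N nu",
        OF finite_atLeastAtMost finite_atLeastAtMost tuples less_imp_le[OF assms(5)] DN_cN]
    by simp
  also have "\<dots> \<le> (\<Sum>s\<in>distinct_tuples l ?T. \<Prod>j=1..l. cN N nu (s j))
        + sum (DN N nu) {1..?T} * (t + 1) ^ (l - 1) * (1 + B) ^ l"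
    using tail by simp
  finally show ?thesis .
qed

end
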